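(* Let $(X,G)$ be a $G$-system with metric $d$ of diameter $\rho$, and let $\zeta\in\mathcal A[0,\rho]$ satisfy $k(\zeta):=k_m(\zeta)=k_M(\zeta)>0$. With $\zeta_d(x,y)=\zeta(d(x,y))$, $$\overline{\mathrm{mdim}}_{\mathrm M}(X,G,d)=k(\zeta)\,\overline{\mathrm{mdim}}_{\mathrm M}(X,G,\zeta_d),\qquad\underline{\mathrm{mdim}}_{\mathrm M}(X,G,d)=k(\zeta)\,\underline{\mathrm{mdim}}_{\mathrm M}(X,G,\zeta_d).$$
   Context: $G$ is a countable discrete amenable group; a $G$-system is a compact metric space with a continuous $G$-action. $\mathcal A[0,\rho]$ is the set of continuous, increasing, subadditive functions $\zeta:[0,\rho]\to[0,\infty)$ with $\zeta^{-1}(0)=\{0\}$; $k_m(\zeta)=\liminf_{\varepsilon\to0^+}\frac{\log\zeta(\varepsilon)}{\log\varepsilon}$, $k_M(\zeta)=\limsup_{\varepsilon\to0^+}\frac{\log\zeta(\varepsilon)}{\log\varepsilon}$. For a Følner sequence $(F_n)$ and metric $\rho'$, $\rho'_F(x,y)=\max_{g\in F}\rho'(gx,gy)$, $s_F(\rho',\varepsilon,X)$ is the maximal cardinality of a subset whose distinct points have $\rho'_F$-distance $>\varepsilon$; $\overline{\mathrm{mdim}}_{\mathrm M}(X,G,\rho')=\limsup_{\varepsilon\to0}\frac1{|\log\varepsilon|}\limsup_n\frac1{|F_n|}\log s_{F_n}(\rho',\varepsilon,X)$ and $\underline{\mathrm{mdim}}_{\mathrm M}$ the same with $\liminf_{\varepsilon\to0}$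 (equivalently with minimal spanning-set cardinalities; independent of the Følner sequence). *)

theory Defs
  imports "HOL-Analysis.Analysis"
begin

text \<open>A G-action of the (multiplicatively thought, additively written) group 'g on 'a.\<close>
definition group_action :: "('g::group_add \<Rightarrow> 'a \<Rightarrow> 'a) \<Rightarrow> bool" where
  "group_action T \<longleftrightarrow> (\<forall>x. T 0 x = x) \<and> (\<forall>g h x. T (g + h) x = T g (T h x))"

definition folner_seq :: "(nat \<Rightarrow> 'g::group_add set) \<Rightarrow> bool" where
  "folner_seq F \<longleftrightarrow> (\<forall>n. finite (F n) \<and> F n \<noteq> {}) \<and>
     (\<forall>g. (\<lambda>n. real (card (((\<lambda>h. g + h) ` F n) - F n \<union> (F n - (\<lambda>h. g + h) ` F n)))
                 / real (card (F n))) \<longlonglongrightarrow> 0)"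

definition amenable_group :: "'g::group_add itself \<Rightarrow> bool" where
  "amenable_group _ \<longleftrightarrow> (\<exists>F::nat \<Rightarrow> 'g set. folner_seq F)"

definition bowen :: "('g \<Rightarrow> 'a \<Rightarrow> 'a) \<Rightarrow> ('a \<Rightarrow> 'a \<Rightarrow> real) \<Rightarrow> 'g set \<Rightarrow> 'a \<Rightarrow> 'a \<Rightarrow> real" where
  "bowen T r F x y = Max ((\<lambda>g. r (T g x) (T g y)) ` F)"

text \<open>s_F(\<rho>',\<epsilon>,X), X = UNIV: maximal cardinality of an \<epsilon>-separated set.\<close>
definition sep_num :: "('g \<Rightarrow> 'a \<Rightarrow> 'a) \<Rightarrow> ('a \<Rightarrow> 'a \<Rightarrow> real) \<Rightarrow> 'g set \<Rightarrow> real \<Rightarrow> nat" where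
  "sep_num T r F \<epsilon> = Sup {card E | E. finite E \<and>
      (\<forall>x\<in>E. \<forall>y\<in>E. x \<noteq> y \<longrightarrow> bowen T r F x y > \<epsilon>)}"

definition upper_mdimM :: "('g \<Rightarrow> 'a \<Rightarrow> 'a) \<Rightarrow> (nat \<Rightarrow> 'g set) \<Rightarrow> ('a \<Rightarrow> 'a \<Rightarrow> real) \<Rightarrow> ereal" where
  "upper_mdimM T F r = Limsup (at_right 0) (\<lambda>\<epsilon>.
      limsup (\<lambda>n. ereal (ln (real (sep_num T r (F n) \<epsilon>)) / real (card (F n))))
      * ereal (1 / \<bar>ln \<epsilon>\<bar>))"

definition lower_mdimM :: "('g \<Rightarrow> 'a \<Rightarrow> 'a) \<Rightarrow> (nat \<Rightarrow> 'g set) \<Rightarrow> ('a \<Rightarrow> 'a \<Rightarrow> real) \<Rightarrow> ereal" where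
  "lower_mdimM T F r = Liminf (at_right 0) (\<lambda>\<epsilon>.
      limsup (\<lambda>n. ereal (ln (real (sep_num T r (F n) \<epsilon>)) / real (card (F n))))
      * ereal (1 / \<bar>ln \<epsilon>\<bar>))"

definition class_A :: "real \<Rightarrow> (real \<Rightarrow> real) \<Rightarrow> bool" where
  "class_A \<rho> \<zeta> \<longleftrightarrow> continuous_on {0..\<rho>} \<zeta> \<and> mono_on {0..\<rho>} \<zeta>
     \<and> (\<forall>s t. 0 \<le> s \<and> 0 \<le> t \<and> s + t \<le> \<rho> \<longrightarrow> \<zeta> (s + t) \<le> \<zeta> s + \<zeta> t)
     \<and> (\<forall>t\<in>{0..\<rho>}. \<zeta> t \<ge> 0)
     \<and> {t\<in>{0..\<rho>}. \<zeta> t = 0} = {0}"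

definition k_m :: "(real \<Rightarrow> real) \<Rightarrow> ereal" where
  "k_m \<zeta> = Liminf (at_right 0) (\<lambda>\<epsilon>. ereal (ln (\<zeta> \<epsilon>) / ln \<epsilon>))"

definition k_M :: "(real \<Rightarrow> real) \<Rightarrow> ereal" where
  "k_M \<zeta> = Limsup (at_right 0) (\<lambda>\<epsilon>. ereal (ln (\<zeta> \<epsilon>) / ln \<epsilon>))"

end

theory Submission
  imports Defs
begin

text \<open>Monotonicity of \<open>\<zeta>\<close> turns \<open>d\<close>-separation at scale \<open>t\<close> into
  \<open>\<zeta>\<^sub>d\<close>-separation at scale \<open>\<zeta>(t)/2\<close>, and \<open>\<zeta>\<^sub>d\<close>-separation at scale \<open>\<zeta>(t)\<close>
  back into \<open>d\<close>-separation at scale \<open>t\<close>. So the separation entropies of \<open>d\<close> and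
  \<open>\<zeta>\<^sub>d\<close> dominate each other after the change of scale \<open>t \<mapsto> \<zeta>(t)\<close>. Being continuous,
  zero at \<open>0\<close> and positive elsewhere, \<open>\<zeta>\<close> maps the filter \<open>t \<rightarrow> 0\<^sup>+\<close> onto itself, so this
  change of scale does not affect upper and lower limits, and \<open>log \<zeta>(t) / log t \<rightarrow> k\<close>
  converts the normalisation \<open>1/|log \<zeta>(t)|\<close> into \<open>1/(k |log t|)\<close>.\<close>

section \<open>Upper and lower limits under a change of scale\<close>

(* Unlike Limsup_filtermap_eq and Liminf_filtermap_eq in the library, no injectivity is needed. *)
lemma Limsup_filtermap: "Limsup (filtermap f F) g = Limsup F (\<lambda>x. g (f x))"
proof (rule antisym[OF _ Limsup_filtermap_ge])
  have "Limsup (filtermap f F) g \<le> (SUP x\<in>Collect P. g (f x))" if "eventually P F" for P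
  proof -
    have ev: "eventually (\<lambda>y. y \<in> f ` Collect P) (filtermap f F)"
      using that by (auto simp: eventually_filtermap elim: eventually_mono)
    have "Limsup (filtermap f F) g \<le> (SUP y\<in>f ` Collect P. g y)"
      unfolding Limsup_def by (rule INF_lower2[of "\<lambda>y. y \<in> f ` Collect P"]) (use ev in auto)
    then show ?thesis by (simp add: image_comp)
  qed
  then show "Limsup (filtermap f F) g \<le> Limsup F (\<lambda>x. g (f x))"
    by (rule Limsup_greatest)
qed

lemma Liminf_filtermap: "Liminf (filtermap f F) g = Liminf F (\<lambda>x. g (f x))"
proof (rule antisym[OF Liminf_filtermap_le])
  have "(INF x\<in>Collect P. g (f x)) \<le> Liminf (filtermap f F) g" if "eventually P F" for P
  proof -
    have ev: "eventually (\<lambda>y. y \<in> f ` Collect P) (filtermap f F)"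
      using that by (auto simp: eventually_filtermap elim: eventually_mono)
    have "(INF y\<in>f ` Collect P. g y) \<le> Liminf (filtermap f F) g"
      unfolding Liminf_def by (rule SUP_upper2[of "\<lambda>y. y \<in> f ` Collect P"]) (use ev in auto)
    then show ?thesis by (simp add: image_comp)
  qed
  then show "Liminf F (\<lambda>x. g (f x)) \<le> Liminf (filtermap f F) g"
    by (rule Liminf_least)
qed

lemma ereal_le_mult_of_le_mult_gt:
  fixes x y :: ereal and c :: real
  assumes "0 \<le> x" "0 < c" and le: "\<And>c'. c < c' \<Longrightarrow> y \<le> x * ereal c'"
  shows "y \<le> x * ereal c"
proof (cases x)
  case (real r)
  show ?thesis
  proof (rule ereal_le_epsilon2)
    fix e :: real assume "0 < e"
    have "0 \<le> r" using assms(1) real by simp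
    then have "r * (e / (r + 1)) \<le> e"
      using \<open>0 < e\<close> by (simp add: field_simps)
    moreover have "y \<le> ereal (r * (c + e / (r + 1)))"
      using le[of "c + e / (r + 1)"] \<open>0 < e\<close> \<open>0 \<le> r\<close> real by simp
    ultimately show "y \<le> x * ereal c + ereal e"
      using real by (simp add: distrib_left order_trans)
  qed
qed (use assms in auto)

lemma ereal_eq_mult_of_le_mult:
  fixes x y :: ereal
  assumes "0 < k" "x \<le> y * ereal k" "y \<le> x * ereal (1 / k)"
  shows "x = ereal k * y"
proof (rule antisym)
  show "x \<le> ereal k * y"
    using assms(2) by (simp add: mult.commute)
  have "ereal k * y \<le> ereal k * (x * ereal (1 / k))"
    using assms(1,3) by (intro ereal_mult_left_mono) auto
  also have "\<dots> = x"
    using assms(1) by (cases x) auto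
  finally show "ereal k * y \<le> x" .
qed

lemma
  fixes f :: "'b \<Rightarrow> ereal" and a :: "'b \<Rightarrow> real"
  assumes "F \<noteq> bot" "\<And>x. 0 \<le> f x" "(a \<longlongrightarrow> c) F" "0 < c"
  shows Limsup_mult_tendsto_le: "Limsup F (\<lambda>x. f x * ereal (a x)) \<le> Limsup F f * ereal c"
    and Liminf_mult_tendsto_le: "Liminf F (\<lambda>x. f x * ereal (a x)) \<le> Liminf F f * ereal c"
proof -
  have bound: "eventually (\<lambda>x. f x * ereal (a x) \<le> f x * ereal c') F" if "c < c'" for c'
    using order_tendstoD(2)[OF assms(3) that]
    by eventually_elim (use assms(2) in \<open>auto intro: ereal_mult_left_mono\<close>)
  have "0 \<le> Liminf F f"
    using assms(2) by (intro Liminf_bounded) auto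
  then have "0 \<le> Limsup F f"
    using Liminf_le_Limsup[OF assms(1)] by (rule order_trans)
  then show "Limsup F (\<lambda>x. f x * ereal (a x)) \<le> Limsup F f * ereal c"
  proof (rule ereal_le_mult_of_le_mult_gt[OF _ assms(4)])
    fix c' assume "c < c'"
    then have "Limsup F (\<lambda>x. f x * ereal (a x)) \<le> Limsup F (\<lambda>x. f x * ereal c')"
      by (intro Limsup_mono bound)
    also have "\<dots> = Limsup F f * ereal c'"
      using \<open>c < c'\<close> assms(1,4) by (intro Limsup_ereal_mult_right) auto
    finally show "Limsup F (\<lambda>x. f x * ereal (a x)) \<le> Limsup F f * ereal c'" .
  qed
  show "Liminf F (\<lambda>x. f x * ereal (a x)) \<le> Liminf F f * ereal c"
  proof (rule ereal_le_mult_of_le_mult_gt[OF \<open>0 \<le> Liminf F f\<close> assms(4)])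
    fix c' assume "c < c'"
    then have "Liminf F (\<lambda>x. f x * ereal (a x)) \<le> Liminf F (\<lambda>x. f x * ereal c')"
      by (intro Liminf_mono bound)
    also have "\<dots> = Liminf F f * ereal c'"
      using \<open>c < c'\<close> assms(1,4) by (intro Liminf_ereal_mult_right) auto
    finally show "Liminf F (\<lambda>x. f x * ereal (a x)) \<le> Liminf F f * ereal c'" .
  qed
qed

lemma filtermap_at_right_0_eq:
  fixes h :: "real \<Rightarrow> real"
  assumes "0 < b" and cont: "continuous_on {0..b} h" and "h 0 = 0"
    and pos: "\<And>t. 0 < t \<Longrightarrow> t \<le> b \<Longrightarrow> 0 < h t"
  shows "filtermap h (at_right 0) = at_right 0"
proof (rule antisym)
  have "(h \<longlongrightarrow> 0) (at_right 0)"
  proof -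
    have "(h \<longlongrightarrow> h 0) (at 0 within {0..b})"
      using cont \<open>0 < b\<close> unfolding continuous_on_def by simp
    then show ?thesis
      using at_within_Icc_at_right[OF \<open>0 < b\<close>] \<open>h 0 = 0\<close> by simp
  qed
  moreover have "eventually (\<lambda>t. 0 < h t) (at_right 0)"
    unfolding eventually_at_right_field using \<open>0 < b\<close> pos by (intro exI[of _ b]) auto
  ultimately show "filtermap h (at_right 0) \<le> at_right 0"
    unfolding filterlim_def[symmetric] filterlim_at by (auto elim: eventually_mono)
next
  show "at_right 0 \<le> filtermap h (at_right 0)"
  proof (rule filter_leI)
    fix P assume "eventually P (filtermap h (at_right 0))"
    then obtain e where "0 < e" and P: "\<And>t. 0 < t \<Longrightarrow> t < e \<Longrightarrow> P (h t)"
      unfolding eventually_filtermap eventually_at_right_field by auto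
    define t0 where "t0 = min (e / 2) b"
    have t0: "0 < t0" "t0 < e" "t0 \<le> b"
      unfolding t0_def using \<open>0 < e\<close> \<open>0 < b\<close> by auto
    have "P s" if s: "0 < s" "s < h t0" for s
    proof -
      have "continuous_on {0..t0} h"
        using t0(3) by (intro continuous_on_subset[OF cont]) auto
      then obtain t where "0 \<le> t" "t \<le> t0" "h t = s"
        using IVT'[of h 0 s t0] s t0(1) \<open>h 0 = 0\<close> by auto
      moreover have "t \<noteq> 0"
        using \<open>h t = s\<close> \<open>0 < s\<close> \<open>h 0 = 0\<close> by auto
      ultimately show "P s"
        using P[of t] t0 by simp
    qed
    then show "eventually P (at_right 0)"
      unfolding eventually_at_right_field using pos[OF t0(1,3)] by (intro exI[of _ "h t0"]) auto
  qed
qed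

lemma
  fixes E1 E2 :: "real \<Rightarrow> ereal" and h1 h2 :: "real \<Rightarrow> real"
  assumes E2_nonneg: "\<And>t. 0 \<le> E2 t"
    and h1: "filtermap h1 (at_right 0) = at_right 0"
    and h2: "filtermap h2 (at_right 0) = at_right 0"
    and le: "eventually (\<lambda>t. E1 (h1 t) \<le> E2 (h2 t)) (at_right 0)"
    and ratio: "((\<lambda>t. ln (h2 t) / ln (h1 t)) \<longlongrightarrow> c) (at_right 0)" and "0 < c"
  shows Limsup_div_abs_ln_le:
      "Limsup (at_right 0) (\<lambda>t. E1 t * ereal (1 / \<bar>ln t\<bar>))
         \<le> Limsup (at_right 0) (\<lambda>t. E2 t * ereal (1 / \<bar>ln t\<bar>)) * ereal c"
    and Liminf_div_abs_ln_le:
      "Liminf (at_right 0) (\<lambda>t. E1 t * ereal (1 / \<bar>ln t\<bar>))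
         \<le> Liminf (at_right 0) (\<lambda>t. E2 t * ereal (1 / \<bar>ln t\<bar>)) * ereal c"
proof -
  define V1 where "V1 t = E1 t * ereal (1 / \<bar>ln t\<bar>)" for t
  define V2 where "V2 t = E2 t * ereal (1 / \<bar>ln t\<bar>)" for t
  have V2_nonneg: "0 \<le> V2 t" for t
    unfolding V2_def using E2_nonneg by simp
  have unit_interval: "eventually (\<lambda>t. 0 < h t \<and> h t < 1) (at_right 0)"
    if "filtermap h (at_right 0) = at_right 0" for h :: "real \<Rightarrow> real"
  proof -
    have "eventually (\<lambda>s. 0 < s \<and> s < (1::real)) (at_right 0)"
      unfolding eventually_at_right_field by (intro exI[of _ 1]) auto
    then show ?thesis
      by (subst (asm) that[symmetric]) (simp add: eventually_filtermap)
  qed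
  have key: "eventually (\<lambda>t. V1 (h1 t) \<le> V2 (h2 t) * ereal (ln (h2 t) / ln (h1 t))) (at_right 0)"
    using le unit_interval[OF h1] unit_interval[OF h2]
  proof eventually_elim
    case (elim t)
    have "ln (h1 t) < 0" "ln (h2 t) < 0"
      using elim by simp_all
    then have scale: "1 / \<bar>ln (h1 t)\<bar> = 1 / \<bar>ln (h2 t)\<bar> * (ln (h2 t) / ln (h1 t))"
      by (simp add: field_simps)
    have "V1 (h1 t) \<le> E2 (h2 t) * ereal (1 / \<bar>ln (h1 t)\<bar>)"
      unfolding V1_def using elim(1) by (intro ereal_mult_right_mono) auto
    also have "\<dots> = V2 (h2 t) * ereal (ln (h2 t) / ln (h1 t))"
      unfolding V2_def scale by (simp add: mult.assoc)
    finally show ?case .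
  qed
  have "Limsup (at_right 0) V1 = Limsup (at_right 0) (\<lambda>t. V1 (h1 t))"
    by (simp add: Limsup_filtermap[symmetric] h1)
  also have "\<dots> \<le> Limsup (at_right 0) (\<lambda>t. V2 (h2 t) * ereal (ln (h2 t) / ln (h1 t)))"
    using key by (rule Limsup_mono)
  also have "\<dots> \<le> Limsup (at_right 0) (\<lambda>t. V2 (h2 t)) * ereal c"
    using ratio \<open>0 < c\<close> V2_nonneg by (intro Limsup_mult_tendsto_le) auto
  also have "\<dots> = Limsup (at_right 0) V2 * ereal c"
    by (simp add: Limsup_filtermap[symmetric] h2)
  finally show "Limsup (at_right 0) V1 \<le> Limsup (at_right 0) V2 * ereal c" .
  have "Liminf (at_right 0) V1 = Liminf (at_right 0) (\<lambda>t. V1 (h1 t))"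
    by (simp add: Liminf_filtermap[symmetric] h1)
  also have "\<dots> \<le> Liminf (at_right 0) (\<lambda>t. V2 (h2 t) * ereal (ln (h2 t) / ln (h1 t)))"
    using key by (rule Liminf_mono)
  also have "\<dots> \<le> Liminf (at_right 0) (\<lambda>t. V2 (h2 t)) * ereal c"
    using ratio \<open>0 < c\<close> V2_nonneg by (intro Liminf_mult_tendsto_le) auto
  also have "\<dots> = Liminf (at_right 0) V2 * ereal c"
    by (simp add: Liminf_filtermap[symmetric] h2)
  finally show "Liminf (at_right 0) V1 \<le> Liminf (at_right 0) V2 * ereal c" .
qed

section \<open>Separated sets and separation entropy\<close>

definition sep_cards :: "('g \<Rightarrow> 'a \<Rightarrow> 'a) \<Rightarrow> ('a \<Rightarrow> 'a \<Rightarrow> real) \<Rightarrow> 'g set \<Rightarrow> real \<Rightarrow> nat set" where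
  "sep_cards T r F \<epsilon> = {card E | E. finite E \<and>
      (\<forall>x\<in>E. \<forall>y\<in>E. x \<noteq> y \<longrightarrow> bowen T r F x y > \<epsilon>)}"

lemma sep_num_eq_Sup_sep_cards: "sep_num T r F \<epsilon> = Sup (sep_cards T r F \<epsilon>)"
  unfolding sep_num_def sep_cards_def ..

lemma zero_in_sep_cards: "0 \<in> sep_cards T r F \<epsilon>"
  unfolding sep_cards_def by (auto intro!: exI[of _ "{}"])

lemma bowen_gt_iff:
  assumes "finite F" "F \<noteq> {}"
  shows "bowen T r F x y > \<epsilon> \<longleftrightarrow> (\<exists>g\<in>F. r (T g x) (T g y) > \<epsilon>)"
  unfolding bowen_def using assms by (subst Max_gr_iff) auto

lemma sep_cards_mono:
  assumes "finite F" "F \<noteq> {}" and gt: "\<And>a b. r1 a b > \<epsilon>1 \<Longrightarrow> r2 a b > \<epsilon>2"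
  shows "sep_cards T r1 F \<epsilon>1 \<subseteq> sep_cards T r2 F \<epsilon>2"
proof
  fix n assume "n \<in> sep_cards T r1 F \<epsilon>1"
  then obtain E where "n = card E" "finite E"
      "\<forall>x\<in>E. \<forall>y\<in>E. x \<noteq> y \<longrightarrow> (\<exists>g\<in>F. r1 (T g x) (T g y) > \<epsilon>1)"
    unfolding sep_cards_def bowen_gt_iff[OF assms(1,2)] by blast
  then show "n \<in> sep_cards T r2 F \<epsilon>2"
    unfolding sep_cards_def bowen_gt_iff[OF assms(1,2)] using gt by blast
qed

lemma sep_num_mono:
  assumes "finite F" "F \<noteq> {}" "\<And>a b. r1 a b > \<epsilon>1 \<Longrightarrow> r2 a b > \<epsilon>2"
    and "bdd_above (sep_cards T r2 F \<epsilon>2)"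
  shows "sep_num T r1 F \<epsilon>1 \<le> sep_num T r2 F \<epsilon>2"
proof -
  have "sep_cards T r1 F \<epsilon>1 \<subseteq> sep_cards T r2 F \<epsilon>2"
    by (rule sep_cards_mono) (use assms in auto)
  then show ?thesis
    unfolding sep_num_eq_Sup_sep_cards using zero_in_sep_cards[of T r1 F \<epsilon>1] assms(4)
    by (intro cSup_subset_mono) auto
qed

lemma sep_num_le_1:
  assumes "finite F" "F \<noteq> {}" "\<And>a b. r a b \<le> \<epsilon>"
  shows "sep_num T r F \<epsilon> \<le> 1"
proof -
  have "sep_cards T r F \<epsilon> \<subseteq> {0, 1}"
  proof
    fix n assume "n \<in> sep_cards T r F \<epsilon>"
    then obtain E where E: "n = card E" "finite E"
        "\<forall>x\<in>E. \<forall>y\<in>E. x \<noteq> y \<longrightarrow> (\<exists>g\<in>F. r (T g x) (T g y) > \<epsilon>)"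
      unfolding sep_cards_def bowen_gt_iff[OF assms(1,2)] by blast
    then have "\<forall>x\<in>E. \<forall>y\<in>E. x = y"
      using assms(3) by (meson leD)
    then show "n \<in> {0, 1}"
      using card_le_Suc0_iff_eq[OF E(2)] E(1) by auto
  qed
  then show ?thesis
    unfolding sep_num_eq_Sup_sep_cards using zero_in_sep_cards[of T r F \<epsilon>] by (intro cSup_least) auto
qed

(* Points of a \<delta>-separated set lie in distinct Bowen balls of radius \<delta>/2 around the
   centres of a finite cover, which exists by compactness. *)
lemma bdd_above_sep_cards_dist:
  fixes T :: "'g \<Rightarrow> 'a::metric_space \<Rightarrow> 'a"
  assumes "compact (UNIV :: 'a set)" "\<And>g. continuous_on UNIV (T g)"
    and F: "finite F" "F \<noteq> {}" and "0 < \<delta>"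
  shows "bdd_above (sep_cards T dist F \<delta>)"
proof -
  define U where "U c = (\<Inter>g\<in>F. T g -` ball (T g c) (\<delta> / 2))" for c
  obtain K where K: "finite K" "(UNIV :: 'a set) \<subseteq> (\<Union>c\<in>K. U c)"
  proof (rule compactE_image[OF assms(1), of UNIV U])
    have "open (T g -` ball z r)" for g z r
      using iffD1[OF continuous_on_open_vimage[OF open_UNIV] assms(2)] by simp
    then show "open (U c)" for c
      unfolding U_def using F(1) by (intro open_INT) auto
    have "x \<in> U x" for x
      unfolding U_def using \<open>0 < \<delta>\<close> by simp
    then show "(UNIV :: 'a set) \<subseteq> (\<Union>c\<in>UNIV. U c)"
      by blast
  qed (rule that)
  have "n \<le> card K" if n: "n \<in> sep_cards T dist F \<delta>" for n
  proof -
    obtain E where E: "n = card E" "finite E"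
      "\<And>x y. x \<in> E \<Longrightarrow> y \<in> E \<Longrightarrow> x \<noteq> y \<Longrightarrow> \<exists>g\<in>F. dist (T g x) (T g y) > \<delta>"
      using n unfolding sep_cards_def bowen_gt_iff[OF F] by blast
    have "\<forall>x. \<exists>c. c \<in> K \<and> x \<in> U c"
      using K(2) by blast
    then obtain center where center: "\<And>x. center x \<in> K \<and> x \<in> U (center x)"
      by metis
    have "inj_on center E"
    proof (rule inj_onI, rule ccontr)
      fix x y assume "x \<in> E" "y \<in> E" "center x = center y" "x \<noteq> y"
      then obtain g where "g \<in> F" "dist (T g x) (T g y) > \<delta>"
        using E(3) by blast
      moreover have "dist (T g (center x)) (T g x) < \<delta> / 2" "dist (T g (center x)) (T g y) < \<delta> / 2"
        using center[of x] center[of y] \<open>g \<in> F\<close> \<open>center x = center y\<close> unfolding U_def by auto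
      ultimately show False
        using dist_triangle3[of "T g x" "T g y" "T g (center x)"] by linarith
    qed
    then have "card E \<le> card K"
      using center K(1) by (intro card_inj_on_le) auto
    then show ?thesis using E(1) by simp
  qed
  then show ?thesis by (rule bdd_aboveI)
qed

definition sep_entropy :: "('g \<Rightarrow> 'a \<Rightarrow> 'a) \<Rightarrow> (nat \<Rightarrow> 'g set) \<Rightarrow> ('a \<Rightarrow> 'a \<Rightarrow> real) \<Rightarrow> real \<Rightarrow> ereal" where
  "sep_entropy T F r \<epsilon> = limsup (\<lambda>n. ereal (ln (real (sep_num T r (F n) \<epsilon>)) / real (card (F n))))"

lemma upper_mdimM_eq_Limsup_sep_entropy:
  "upper_mdimM T F r = Limsup (at_right 0) (\<lambda>\<epsilon>. sep_entropy T F r \<epsilon> * ereal (1 / \<bar>ln \<epsilon>\<bar>))"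
  unfolding upper_mdimM_def sep_entropy_def ..

lemma lower_mdimM_eq_Liminf_sep_entropy:
  "lower_mdimM T F r = Liminf (at_right 0) (\<lambda>\<epsilon>. sep_entropy T F r \<epsilon> * ereal (1 / \<bar>ln \<epsilon>\<bar>))"
  unfolding lower_mdimM_def sep_entropy_def ..

lemma ln_of_nat_nonneg: "0 \<le> ln (real (n :: nat))"
  by (cases "n = 0") auto

lemma sep_entropy_nonneg: "0 \<le> sep_entropy T F r \<epsilon>"
proof -
  have "0 \<le> liminf (\<lambda>n. ereal (ln (real (sep_num T r (F n) \<epsilon>)) / real (card (F n))))"
    by (intro Liminf_bounded always_eventually) (simp add: ln_of_nat_nonneg)
  then show ?thesis
    unfolding sep_entropy_def using Liminf_le_Limsup[of sequentially] by (auto intro: order_trans)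
qed

lemma sep_entropy_mono:
  assumes "\<And>n. sep_num T r1 (F n) \<epsilon>1 \<le> sep_num T r2 (F n) \<epsilon>2"
  shows "sep_entropy T F r1 \<epsilon>1 \<le> sep_entropy T F r2 \<epsilon>2"
proof -
  have "ln (real (sep_num T r1 (F n) \<epsilon>1)) \<le> ln (real (sep_num T r2 (F n) \<epsilon>2))" for n
    using assms[of n] by (cases "sep_num T r1 (F n) \<epsilon>1 = 0") (auto simp: ln_of_nat_nonneg)
  then show ?thesis
    unfolding sep_entropy_def
    by (intro Limsup_mono always_eventually allI) (simp add: divide_right_mono)
qed

section \<open>Comparing \<open>d\<close> with \<open>\<zeta> \<circ> d\<close>\<close>

locale compact_system =
  fixes T :: "'g \<Rightarrow> 'a::metric_space \<Rightarrow> 'a" and F :: "nat \<Rightarrow> 'g set"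
  assumes continuous_T: "\<And>g. continuous_on UNIV (T g)"
    and compact_UNIV: "compact (UNIV :: 'a set)"
    and finite_F: "\<And>n. finite (F n)"
    and F_nonempty: "\<And>n. F n \<noteq> {}"
begin

lemma sep_entropy_le_if_gt_imp_gt:
  assumes gt: "\<And>a b. r1 a b > \<epsilon>1 \<Longrightarrow> r2 a b > \<epsilon>2"
    and "0 < \<delta>" and dist_gt: "\<And>a b. r2 a b > \<epsilon>2 \<Longrightarrow> dist a b > \<delta>"
  shows "sep_entropy T F r1 \<epsilon>1 \<le> sep_entropy T F r2 \<epsilon>2"
proof (intro sep_entropy_mono sep_num_mono[OF finite_F F_nonempty gt])
  fix n
  have "sep_cards T r2 (F n) \<epsilon>2 \<subseteq> sep_cards T dist (F n) \<delta>"
    by (rule sep_cards_mono[OF finite_F F_nonempty dist_gt])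
  with bdd_above_sep_cards_dist[OF compact_UNIV continuous_T finite_F F_nonempty \<open>0 < \<delta>\<close>]
  show "bdd_above (sep_cards T r2 (F n) \<epsilon>2)"
    by (rule bdd_above_mono)
qed

lemma mdimM_eq_0_if_nonpos:
  assumes "\<And>a b. r a b \<le> 0"
  shows "upper_mdimM T F r = 0" and "lower_mdimM T F r = 0"
proof -
  have entropy_0: "sep_entropy T F r \<epsilon> = 0" if "0 < \<epsilon>" for \<epsilon>
  proof -
    have "r a b \<le> \<epsilon>" for a b
      using assms[of a b] \<open>0 < \<epsilon>\<close> by linarith
    then have "sep_num T r (F n) \<epsilon> \<le> 1" for n
      by (rule sep_num_le_1[OF finite_F F_nonempty])
    then have "ln (real (sep_num T r (F n) \<epsilon>)) = 0" for n
      by (metis One_nat_def le_Suc_eq le_zero_eq ln_one of_nat_0 of_nat_1 ln_0)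
    then show ?thesis
      unfolding sep_entropy_def by (simp add: zero_ereal_def[symmetric] Limsup_const)
  qed
  have ev: "eventually (\<lambda>\<epsilon>. sep_entropy T F r \<epsilon> * ereal (1 / \<bar>ln \<epsilon>\<bar>) = 0) (at_right 0)"
    by (rule eventually_mono[OF eventually_at_right_less]) (simp add: entropy_0)
  show "upper_mdimM T F r = 0" "lower_mdimM T F r = 0"
    unfolding upper_mdimM_eq_Limsup_sep_entropy lower_mdimM_eq_Liminf_sep_entropy
    by (simp_all only: Limsup_eq[OF ev] Liminf_eq[OF ev]
        Limsup_const[OF trivial_limit_at_right_real] Liminf_const[OF trivial_limit_at_right_real])
qed

context
  fixes \<rho> :: real and \<zeta> :: "real \<Rightarrow> real"
  assumes dist_le: "\<And>a b :: 'a. dist a b \<le> \<rho>" and "0 < \<rho>"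
    and zeta_continuous: "continuous_on {0..\<rho>} \<zeta>"
    and zeta_mono: "mono_on {0..\<rho>} \<zeta>"
    and zeta_0: "\<zeta> 0 = 0"
    and zeta_pos: "\<And>t. 0 < t \<Longrightarrow> t \<le> \<rho> \<Longrightarrow> 0 < \<zeta> t"
begin

lemma zeta_le: "0 \<le> s \<Longrightarrow> s \<le> t \<Longrightarrow> t \<le> \<rho> \<Longrightarrow> \<zeta> s \<le> \<zeta> t"
  using mono_onD[OF zeta_mono] by simp

lemma filtermap_zeta: "filtermap \<zeta> (at_right 0) = at_right 0"
  by (rule filtermap_at_right_0_eq[OF \<open>0 < \<rho>\<close> zeta_continuous zeta_0 zeta_pos])

lemma eventually_in_domain: "eventually (\<lambda>s. 0 < s \<and> s \<le> \<rho>) (at_right 0)"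
  unfolding eventually_at_right_field using \<open>0 < \<rho>\<close> by (intro exI[of _ \<rho>]) auto

lemma eventually_zeta_less:
  assumes "0 < c"
  shows "eventually (\<lambda>s. \<zeta> s < c) (at_right 0)"
proof -
  have "eventually (\<lambda>u. u < c) (at_right 0)"
    unfolding eventually_at_right_field using assms by (intro exI[of _ c]) auto
  then show ?thesis
    by (subst (asm) filtermap_zeta[symmetric]) (simp add: eventually_filtermap)
qed

(* \<zeta> need not be strictly increasing, hence the scale \<zeta> t / 2 rather than \<zeta> t. *)
lemma sep_entropy_dist_le_zeta:
  assumes "0 < t" "t \<le> \<rho>"
  shows "sep_entropy T F dist t \<le> sep_entropy T F (\<lambda>x y. \<zeta> (dist x y)) (\<zeta> t / 2)"
proof -
  have "0 < \<zeta> t"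
    using zeta_pos assms by simp
  then have "eventually (\<lambda>s. (0 < s \<and> s \<le> \<rho>) \<and> \<zeta> s < \<zeta> t / 2) (at_right 0)"
    by (intro eventually_conj eventually_in_domain eventually_zeta_less) simp
  then obtain \<delta> where \<delta>: "0 < \<delta>" "\<delta> \<le> \<rho>" "\<zeta> \<delta> < \<zeta> t / 2"
    using eventually_happens'[OF trivial_limit_at_right_real] by blast
  show ?thesis
  proof (rule sep_entropy_le_if_gt_imp_gt[OF _ \<open>0 < \<delta>\<close>])
    fix a b :: 'a
    assume "dist a b > t"
    then have "\<zeta> t \<le> \<zeta> (dist a b)"
      using zeta_le[of t "dist a b"] assms dist_le[of a b] by simp
    then show "\<zeta> (dist a b) > \<zeta> t / 2"
      using \<open>0 < \<zeta> t\<close> by simp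
  next
    fix a b :: 'a
    assume "\<zeta> (dist a b) > \<zeta> t / 2"
    then show "dist a b > \<delta>"
      using zeta_le[of "dist a b" \<delta>] \<delta> by fastforce
  qed
qed

lemma sep_entropy_zeta_le_dist:
  assumes "0 < t" "t \<le> \<rho>"
  shows "sep_entropy T F (\<lambda>x y. \<zeta> (dist x y)) (\<zeta> t) \<le> sep_entropy T F dist t"
proof (rule sep_entropy_le_if_gt_imp_gt[OF _ \<open>0 < t\<close>])
  fix a b :: 'a
  assume "\<zeta> (dist a b) > \<zeta> t"
  then show "dist a b > t"
    using zeta_le[of "dist a b" t] assms by fastforce
qed

lemma mdimM_dist_eq_mult_mdimM_zeta:
  assumes k: "((\<lambda>t. ln (\<zeta> t) / ln t) \<longlongrightarrow> k) (at_right 0)" "0 < k"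
  shows "upper_mdimM T F dist = ereal k * upper_mdimM T F (\<lambda>x y. \<zeta> (dist x y))
    \<and> lower_mdimM T F dist = ereal k * lower_mdimM T F (\<lambda>x y. \<zeta> (dist x y))"
proof -
  define E where "E r = sep_entropy T F r" for r :: "'a \<Rightarrow> 'a \<Rightarrow> real"
  have E_nonneg: "0 \<le> E r t" for r t
    unfolding E_def by (rule sep_entropy_nonneg)
  have filtermap_half: "filtermap (\<lambda>t. \<zeta> t / 2) (at_right 0) = at_right 0"
    using zeta_continuous zeta_0 zeta_pos
    by (intro filtermap_at_right_0_eq[OF \<open>0 < \<rho>\<close>] continuous_intros) auto
  have filtermap_id: "filtermap (\<lambda>t. t) (at_right (0::real)) = at_right 0"
    by (simp add: filtermap_ident)
  have zeta_pos_ev: "eventually (\<lambda>t. 0 < \<zeta> t) (at_right 0)"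
    using eventually_in_domain by eventually_elim (simp add: zeta_pos)
  have "((\<lambda>t. ln (\<zeta> t) / ln t - ln 2 / ln t) \<longlongrightarrow> k) (at_right 0)"
    using tendsto_diff[OF k(1) tendsto_divide_0[OF tendsto_const
        filterlim_mono[OF ln_at_0 at_bot_le_at_infinity order_refl]]]
    by simp
  moreover have "eventually (\<lambda>t. ln (\<zeta> t) / ln t - ln 2 / ln t = ln (\<zeta> t / 2) / ln t) (at_right 0)"
    using zeta_pos_ev by eventually_elim (simp add: ln_div diff_divide_distrib)
  ultimately have ratio_half: "((\<lambda>t. ln (\<zeta> t / 2) / ln t) \<longlongrightarrow> k) (at_right 0)"
    by (rule Lim_transform_eventually)
  have ratio_inv: "((\<lambda>t. ln t / ln (\<zeta> t)) \<longlongrightarrow> 1 / k) (at_right 0)"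
    using tendsto_inverse[OF k(1)] \<open>0 < k\<close> by (simp add: inverse_eq_divide)
  have dist_zeta: "eventually (\<lambda>t. E dist t \<le> E (\<lambda>x y. \<zeta> (dist x y)) (\<zeta> t / 2)) (at_right 0)"
    using eventually_in_domain by eventually_elim (simp add: E_def sep_entropy_dist_le_zeta)
  have zeta_dist: "eventually (\<lambda>t. E (\<lambda>x y. \<zeta> (dist x y)) (\<zeta> t) \<le> E dist t) (at_right 0)"
    using eventually_in_domain by eventually_elim (simp add: E_def sep_entropy_zeta_le_dist)
  note upper = Limsup_div_abs_ln_le[OF E_nonneg] and lower = Liminf_div_abs_ln_le[OF E_nonneg]
  show ?thesis
    unfolding upper_mdimM_eq_Limsup_sep_entropy lower_mdimM_eq_Liminf_sep_entropy E_def[symmetric]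
    using upper[OF filtermap_id filtermap_half dist_zeta ratio_half \<open>0 < k\<close>]
      upper[OF filtermap_zeta filtermap_id zeta_dist ratio_inv]
      lower[OF filtermap_id filtermap_half dist_zeta ratio_half \<open>0 < k\<close>]
      lower[OF filtermap_zeta filtermap_id zeta_dist ratio_inv]
    by (auto intro!: ereal_eq_mult_of_le_mult \<open>0 < k\<close>)
qed

end

end

lemma class_A_zero:
  assumes "class_A \<rho> \<zeta>" "0 \<le> \<rho>"
  shows "\<zeta> 0 = 0"
  using assms unfolding class_A_def by auto

lemma class_A_pos:
  assumes "class_A \<rho> \<zeta>" "0 < t" "t \<le> \<rho>"
  shows "0 < \<zeta> t"
proof -
  have "t \<notin> {s \<in> {0..\<rho>}. \<zeta> s = 0}" "0 \<le> \<zeta> t"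
    using assms unfolding class_A_def by auto
  then show ?thesis
    using assms(2,3) by auto
qed

lemma tendsto_of_k_m_eq_k_M:
  assumes "k_m \<zeta> = ereal k" "k_M \<zeta> = ereal k"
  shows "((\<lambda>t. ln (\<zeta> t) / ln t) \<longlongrightarrow> k) (at_right 0)"
proof -
  have "((\<lambda>t. ereal (ln (\<zeta> t) / ln t)) \<longlongrightarrow> ereal k) (at_right 0)"
    using assms unfolding k_m_def k_M_def by (intro Liminf_eq_Limsup) auto
  then show ?thesis by simp
qed

theorem mainTheorem15:
  fixes T :: "'g::{group_add, countable} \<Rightarrow> 'a::metric_space \<Rightarrow> 'a"
    and F :: "nat \<Rightarrow> 'g set"
    and \<zeta> :: "real \<Rightarrow> real" and k :: real
  assumes "group_action T"
    and "\<And>g. continuous_on UNIV (T g)"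
    and "compact (UNIV :: 'a set)"
    and "amenable_group TYPE('g)"
    and "folner_seq F"
    and "class_A (diameter (UNIV :: 'a set)) \<zeta>"
    and "k_m \<zeta> = ereal k" and "k_M \<zeta> = ereal k" and "k > 0"
  shows "upper_mdimM T F (dist :: 'a \<Rightarrow> 'a \<Rightarrow> real)
           = ereal k * upper_mdimM T F (\<lambda>x y. \<zeta> (dist x y))
         \<and> lower_mdimM T F (dist :: 'a \<Rightarrow> 'a \<Rightarrow> real)
           = ereal k * lower_mdimM T F (\<lambda>x y. \<zeta> (dist x y))"
proof -
  interpret compact_system T F
    using assms(2,3,5) by unfold_locales (auto simp: folner_seq_def)
  define \<rho> where "\<rho> = diameter (UNIV :: 'a set)"
  have "bounded (UNIV :: 'a set)"
    using assms(3) by (rule compact_imp_bounded)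
  then have dist_le: "dist a b \<le> \<rho>" and "0 \<le> \<rho>" for a b :: 'a
    unfolding \<rho>_def by (simp_all add: diameter_bounded_bound diameter_ge_0)
  have \<zeta>: "class_A \<rho> \<zeta>" "\<zeta> 0 = 0"
    using assms(6) class_A_zero \<open>0 \<le> \<rho>\<close> unfolding \<rho>_def by auto
  show ?thesis
  proof (cases "\<rho> = 0")
    case True
    then have "dist a b \<le> 0" "\<zeta> (dist a b) = dist a b" for a b :: 'a
      using dist_le[of a b] \<zeta>(2) by auto
    then show ?thesis
      using mdimM_eq_0_if_nonpos[of dist] by simp
  next
    case False
    with \<open>0 \<le> \<rho>\<close> have "0 < \<rho>" by simp
    then show ?thesis
      using \<zeta> class_A_pos[OF \<zeta>(1)] tendsto_of_k_m_eq_k_M[OF assms(7,8)] \<open>0 < k\<close>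
      by (intro mdimM_dist_eq_mult_mdimM_zeta[OF dist_le]) (auto simp: class_A_def)
  qed
qed

end
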